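(* Let $N$ be a one-dimensional homogeneous $S^{1}$-space, $k\geq2$, $\omega$ an $S^{1}$-invariant volume form on $N\times\mathbb{R}^{k}$ (with $S^{1}$ acting via the first factor), $X$ the vector field on $N\times\mathbb{R}^{k}$ generating the $S^{1}$-action, and $h$ a non-constant smooth function on $N\times\mathbb{R}^{k}$ with $X(h)=0$. Then there exists a compactly supported smooth vector field $Y$ on $N\times\mathbb{R}^{k}$ with $\operatorname{div}_{\omega}(Y)=0$ and $[X,Y]=0$ such that $Y(h)$ is not identically zero.
   Context: A one-dimensional homogeneous $S^{1}$-space is a quotient $S^{1}/H$ by a closed subgroup $H$ with $\dim S^{1}/H=1$. For a volume form $\omega$ the divergence is defined by $\operatorname{div}_{\omega}(Y)\,\omega=L_{Y}\omega=d(i_{Y}\omega)$. *)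

theory Defs
  imports "HOL-Analysis.Analysis"
begin

fun Cn :: "nat \<Rightarrow> ('a::euclidean_space \<Rightarrow> real) \<Rightarrow> bool" where
  "Cn 0 f = continuous_on UNIV f"
| "Cn (Suc n) f = (f differentiable_on UNIV \<and>
      (\<forall>i\<in>Basis. Cn n (\<lambda>x. frechet_derivative f (at x) i)))"

definition smooth_fun :: "('a::euclidean_space \<Rightarrow> real) \<Rightarrow> bool" where
  "smooth_fun f \<longleftrightarrow> (\<forall>n. Cn n f)"

definition smooth_vf :: "('a::euclidean_space \<Rightarrow> 'a) \<Rightarrow> bool" where
  "smooth_vf Y \<longleftrightarrow> (\<forall>i\<in>Basis. smooth_fun (\<lambda>p. Y p \<bullet> i))"

definition vf_apply :: "('a::euclidean_space \<Rightarrow> 'a) \<Rightarrow> ('a \<Rightarrow> real) \<Rightarrow> 'a \<Rightarrow> real" where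
  "vf_apply Y h p = frechet_derivative h (at p) (Y p)"

definition lie_bracket :: "('a::euclidean_space \<Rightarrow> 'a) \<Rightarrow> ('a \<Rightarrow> 'a) \<Rightarrow> 'a \<Rightarrow> 'a" where
  "lie_bracket X Y p = frechet_derivative Y (at p) (X p) - frechet_derivative X (at p) (Y p)"

text \<open>Divergence of Y with respect to the volume form rho dx_1 ... dx_n
  (rho nowhere zero): div Y = (1/rho) sum_i d_i (rho Y_i).\<close>
definition div_vol :: "('a::euclidean_space \<Rightarrow> real) \<Rightarrow> ('a \<Rightarrow> 'a) \<Rightarrow> 'a \<Rightarrow> real" where
  "div_vol \<rho> Y p = (\<Sum>i\<in>Basis. frechet_derivative (\<lambda>q. \<rho> q * (Y q \<bullet> i)) (at p) i) / \<rho> p"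

text \<open>Coordinates on N x R^k, N = S^1/Z_m = R/(2 pi/m)Z: points (theta, x) with
  theta real, x in R^k; objects on N x R^k are lifts periodic in theta.\<close>
definition theta_periodic :: "real \<Rightarrow> (real \<times> 'b \<Rightarrow> 'c) \<Rightarrow> bool" where
  "theta_periodic T f \<longleftrightarrow> (\<forall>\<theta> x. f (\<theta> + T, x) = f (\<theta>, x))"

definition gen_X :: "real \<times> (real^'k) \<Rightarrow> real \<times> (real^'k)" where
  "gen_X p = (1, 0)"

text \<open>Compact support on N x R^k (N compact): vanishing outside N x B, B bounded.\<close>
definition compact_supp_N :: "(real \<times> (real^'k) \<Rightarrow> real \<times> (real^'k)) \<Rightarrow> bool" where
  "compact_supp_N Y \<longleftrightarrow> (\<exists>B. bounded B \<and> (\<forall>\<theta> x. x \<notin> B \<longrightarrow> Y (\<theta>, x) = 0))"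

end

theory Submission
  imports Defs "HOL-Computational_Algebra.Polynomial"
begin

text \<open>Since \<partial>/\<partial>\<theta> h = 0 and h is not constant,
  some partial derivative \<partial>h/\<partial>x_u along a coordinate of R^k is nonzero at a point (\<theta>0, x0).
  Choose a second coordinate w \<noteq> u (this is where k \<ge> 2 enters) and a \<theta>-independent
  function F, a product of smooth bumps in the coordinates centred at x0, with \<partial>F/\<partial>x_w \<noteq> 0
  and \<partial>F/\<partial>x_u = 0 at x0. Then Y = (\<partial>F/\<partial>x_w \<partial>/\<partial>x_u - \<partial>F/\<partial>x_u \<partial>/\<partial>x_w) / \<rho> has compact
  support, commutes with X = \<partial>/\<partial>\<theta> because nothing depends on \<theta>, is divergence free because
  mixed partials of F commute, and Y(h) = \<partial>F/\<partial>x_w \<partial>h/\<partial>x_u / \<rho> \<noteq> 0 at (\<theta>0, x0).\<close>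

section \<open>Calculus of C^n functions\<close>

lemma Cn_Suc_has_derivative: "Cn (Suc n) f \<Longrightarrow> (f has_derivative frechet_derivative f (at x)) (at x)"
  by (auto simp: differentiable_on_def frechet_derivative_works[symmetric])

lemma Cn_SucI:
  assumes "\<And>x. (f has_derivative f' x) (at x)" "\<And>i. i \<in> Basis \<Longrightarrow> Cn n (\<lambda>x. f' x i)"
  shows "Cn (Suc n) f"
proof -
  have "frechet_derivative f (at x) = f' x" for x
    using frechet_derivative_at[OF assms(1)] by simp
  moreover have "f differentiable_on UNIV"
    using assms(1) unfolding differentiable_on_def differentiable_def by blast
  ultimately show ?thesis using assms(2) by simp
qed

lemma Cn_Suc_imp_Cn: "Cn (Suc n) f \<Longrightarrow> Cn n f"
proof (induction n arbitrary: f)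
  case 0
  then show ?case by (auto intro: differentiable_imp_continuous_on)
next
  case (Suc n)
  then show ?case by (metis Cn.simps(2))
qed

lemma Cn_const: "Cn n (\<lambda>x. c)"
proof (induction n arbitrary: c)
  case 0
  then show ?case by simp
next
  case (Suc n)
  then show ?case by (intro Cn_SucI[where f'="\<lambda>x h. 0"]) auto
qed

lemma Cn_inner: "Cn n (\<lambda>x. x \<bullet> v)"
proof (cases n)
  case 0
  then show ?thesis by (simp add: continuous_on_inner)
next
  case (Suc m)
  show ?thesis unfolding Suc
    by (rule Cn_SucI[where f'="\<lambda>x h. h \<bullet> v"]) (auto intro!: derivative_eq_intros Cn_const)
qed

lemma Cn_id: "Cn n (\<lambda>t::real. t)"
  using Cn_inner[of n "1::real"] by simp

lemma Cn_add: "Cn n f \<Longrightarrow> Cn n g \<Longrightarrow> Cn n (\<lambda>x. f x + g x)"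
proof (induction n arbitrary: f g)
  case 0
  then show ?case by (auto intro: continuous_on_add)
next
  case (Suc n)
  show ?case
  proof (rule Cn_SucI)
    show "((\<lambda>x. f x + g x) has_derivative
        (\<lambda>h. frechet_derivative f (at x) h + frechet_derivative g (at x) h)) (at x)" for x
      using Suc.prems by (intro has_derivative_add Cn_Suc_has_derivative)
    show "Cn n (\<lambda>x. frechet_derivative f (at x) i + frechet_derivative g (at x) i)" if "i \<in> Basis" for i
      using Suc.prems that by (intro Suc.IH) auto
  qed
qed

lemma Cn_mult: "Cn n f \<Longrightarrow> Cn n g \<Longrightarrow> Cn n (\<lambda>x. f x * g x)"
proof (induction n arbitrary: f g)
  case 0
  then show ?case by (auto intro: continuous_on_mult)
next
  case (Suc n)
  show ?case
  proof (rule Cn_SucI)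
    show "((\<lambda>x. f x * g x) has_derivative
        (\<lambda>h. f x * frechet_derivative g (at x) h + frechet_derivative f (at x) h * g x)) (at x)" for x
      using Suc.prems by (intro has_derivative_mult Cn_Suc_has_derivative)
    show "Cn n (\<lambda>x. f x * frechet_derivative g (at x) i + frechet_derivative f (at x) i * g x)"
      if "i \<in> Basis" for i
      using Suc.prems that by (intro Cn_add Suc.IH) (auto intro: Cn_Suc_imp_Cn)
  qed
qed

lemma Cn_diff: "Cn n f \<Longrightarrow> Cn n g \<Longrightarrow> Cn n (\<lambda>x. f x - g x)"
  using Cn_add[of n f "\<lambda>x. (-1) * g x"] Cn_mult[OF Cn_const, of n g "-1"] by simp

lemma Cn_inverse: "Cn n f \<Longrightarrow> (\<And>x. f x \<noteq> 0) \<Longrightarrow> Cn n (\<lambda>x. inverse (f x))"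
proof (induction n arbitrary: f)
  case 0
  then show ?case by (auto intro!: continuous_on_inverse)
next
  case (Suc n)
  have inv: "Cn n (\<lambda>x. inverse (f x))"
    using Suc.IH[OF Cn_Suc_imp_Cn[OF Suc.prems(1)]] Suc.prems(2) by blast
  show ?case
  proof (rule Cn_SucI)
    show "((\<lambda>x. inverse (f x)) has_derivative
        (\<lambda>h. - (inverse (f x) * frechet_derivative f (at x) h * inverse (f x)))) (at x)" for x
      using Suc.prems by (intro Deriv.has_derivative_inverse Cn_Suc_has_derivative)
    show "Cn n (\<lambda>x. - (inverse (f x) * frechet_derivative f (at x) i * inverse (f x)))" if "i \<in> Basis" for i
    proof -
      have "Cn n (\<lambda>x. frechet_derivative f (at x) i)" using Suc.prems(1) that by simp
      then have "Cn n (\<lambda>x. inverse (f x) * frechet_derivative f (at x) i * inverse (f x))"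
        using Cn_mult inv by blast
      then show ?thesis using Cn_mult[OF Cn_const, of n _ "-1"] by simp
    qed
  qed
qed

lemma Cn_prod: "finite S \<Longrightarrow> (\<And>s. s \<in> S \<Longrightarrow> Cn n (f s)) \<Longrightarrow> Cn n (\<lambda>x. \<Prod>s\<in>S. f s x)"
  by (induction S rule: finite_induct) (auto intro: Cn_mult Cn_const)

lemma linear_real_eq: "linear L \<Longrightarrow> L (h::real) = h * L 1"
  by (metis linear_cmul mult.right_neutral real_scaleR_def)

definition real_deriv :: "(real \<Rightarrow> real) \<Rightarrow> real \<Rightarrow> real" where
  "real_deriv g t = frechet_derivative g (at t) 1"

lemma Cn_real_deriv: "Cn (Suc n) g \<Longrightarrow> Cn n (real_deriv g)"
  by (simp add: Basis_real_def real_deriv_def[abs_def])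

lemma has_real_derivative_real_deriv:
  assumes "Cn (Suc n) g"
  shows "(g has_real_derivative real_deriv g t) (at t)"
proof -
  have d: "(g has_derivative frechet_derivative g (at t)) (at t)"
    using Cn_Suc_has_derivative[OF assms] .
  have "frechet_derivative g (at t) = (\<lambda>h. real_deriv g t * h)"
    unfolding real_deriv_def by (rule ext) (metis linear_real_eq[OF has_derivative_linear[OF d]] mult.commute)
  with d show ?thesis by (simp add: has_field_derivative_def)
qed

lemma Cn_compose:
  fixes g :: "real \<Rightarrow> real"
  shows "Cn n g \<Longrightarrow> Cn n f \<Longrightarrow> Cn n (\<lambda>x. g (f x))"
proof (induction n arbitrary: f g)
  case 0
  then show ?case by (auto intro: continuous_on_compose2)
next
  case (Suc n)
  have g': "Cn n (\<lambda>x. real_deriv g (f x))"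
    by (rule Suc.IH[OF Cn_real_deriv[OF Suc.prems(1)] Cn_Suc_imp_Cn[OF Suc.prems(2)]])
  have g_lin: "frechet_derivative g (at y) t = real_deriv g y * t" for y t
    using linear_real_eq[OF has_derivative_linear[OF Cn_Suc_has_derivative[OF Suc.prems(1)]]]
    by (metis real_deriv_def mult.commute)
  show ?case
  proof (rule Cn_SucI)
    show "((\<lambda>x. g (f x)) has_derivative
        (\<lambda>h. frechet_derivative g (at (f x)) (frechet_derivative f (at x) h))) (at x)" for x
      by (rule has_derivative_compose[OF Cn_Suc_has_derivative[OF Suc.prems(2)]
          Cn_Suc_has_derivative[OF Suc.prems(1)]])
    show "Cn n (\<lambda>x. frechet_derivative g (at (f x)) (frechet_derivative f (at x) i))" if "i \<in> Basis" for i
      unfolding g_lin using Cn_mult[OF g'] Suc.prems(2) that by simp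
  qed
qed

lemma has_derivative_comp_inner:
  assumes "Cn (Suc n) g"
  shows "((\<lambda>p. g (p \<bullet> v)) has_derivative (\<lambda>h. (h \<bullet> v) * real_deriv g (p \<bullet> v))) (at p)"
proof -
  have "(g has_derivative (\<lambda>t. t * real_deriv g (p \<bullet> v))) (at (p \<bullet> v))"
    using has_real_derivative_real_deriv[OF assms]
    by (simp add: has_field_derivative_def mult.commute[of _ "real_deriv g _"])
  then show ?thesis
    using has_derivative_compose[of "\<lambda>p. p \<bullet> v" "\<lambda>h. h \<bullet> v" p UNIV g] by (simp add: has_derivative_inner_left)
qed

section \<open>Smooth bump functions\<close>

text \<open>The functions s \<mapsto> P(1/s) exp(-1/s) for s > 0, extended by 0, form a family closed under
  differentiation, which gives smoothness without estimating derivatives.\<close>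

definition flat :: "real poly \<Rightarrow> real \<Rightarrow> real" where
  "flat P s = (if s > 0 then poly P (1/s) * exp (-(1/s)) else 0)"

definition flat_deriv_poly :: "real poly \<Rightarrow> real poly" where
  "flat_deriv_poly P = [:0, 0, 1:] * (P - pderiv P)"

lemma poly_times_exp_neg_tendsto_0: "((\<lambda>u. poly P u * exp (-u)) \<longlongrightarrow> (0::real)) at_top"
proof -
  have eq: "(\<lambda>u. poly P u * exp (-u)) = (\<lambda>u. \<Sum>i\<le>degree P. coeff P i * (u ^ i / exp u))"
    by (rule ext) (simp add: poly_altdef sum_distrib_right exp_minus divide_inverse mult.assoc)
  have "((\<lambda>u. \<Sum>i\<le>degree P. coeff P i * (u ^ i / exp u)) \<longlongrightarrow> (\<Sum>i\<le>degree P. coeff P i * 0)) at_top"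
    by (intro tendsto_sum tendsto_mult tendsto_const tendsto_power_div_exp_0)
  then show ?thesis unfolding eq by simp
qed

lemma flat_tendsto_0: "(flat P \<longlongrightarrow> 0) (at 0)"
proof (rule filterlim_split_at)
  have "((\<lambda>s. poly P (inverse s) * exp (- inverse s)) \<longlongrightarrow> 0) (at_right (0::real))"
    using filterlim_compose[OF poly_times_exp_neg_tendsto_0 filterlim_inverse_at_top_right] by simp
  then show "(flat P \<longlongrightarrow> 0) (at_right 0)"
    by (rule Lim_transform_eventually)
       (auto simp: flat_def eventually_at_right_field divide_inverse intro!: exI[of _ 1])
  have "eventually (\<lambda>s. 0 = flat P s) (at_left (0::real))"
    by (auto simp: flat_def eventually_at_left_field intro!: exI[of _ "-1"])
  then show "(flat P \<longlongrightarrow> 0) (at_left 0)"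
    by (rule Lim_transform_eventually[OF tendsto_const])
qed

lemma flat_has_real_derivative: "(flat P has_real_derivative flat (flat_deriv_poly P) s) (at s)"
proof -
  consider "s > 0" | "s < 0" | "s = 0" by linarith
  then show ?thesis
  proof cases
    case 1
    have "((\<lambda>s. poly P (1/s) * exp (-(1/s))) has_real_derivative
           poly (pderiv P) (1/s) * (- 1/s^2) * exp (-(1/s)) + poly P (1/s) * (exp (-(1/s)) * (1/s^2))) (at s)"
      using 1 by (auto intro!: derivative_eq_intros DERIV_chain2[OF poly_DERIV]
          simp: power2_eq_square field_simps)
    then have "(flat P has_real_derivative
           poly (pderiv P) (1/s) * (- 1/s^2) * exp (-(1/s)) + poly P (1/s) * (exp (-(1/s)) * (1/s^2))) (at s)"
      by (rule has_field_derivative_transform_within_open[where S="{0<..}"]) (use 1 in \<open>auto simp: flat_def\<close>)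
    moreover have "poly (pderiv P) (1/s) * (- 1/s^2) * exp (-(1/s)) + poly P (1/s) * (exp (-(1/s)) * (1/s^2))
        = flat (flat_deriv_poly P) s"
      using 1 by (simp add: flat_def flat_deriv_poly_def algebra_simps power2_eq_square)
    ultimately show ?thesis by simp
  next
    case 2
    have "((\<lambda>s. 0) has_real_derivative 0) (at s)" by simp
    then have "(flat P has_real_derivative 0) (at s)"
      by (rule has_field_derivative_transform_within_open[where S="{..<0}"]) (use 2 in \<open>auto simp: flat_def\<close>)
    then show ?thesis using 2 by (simp add: flat_def)
  next
    case 3
    have "(\<lambda>y. (flat P y - flat P 0) / (y - 0)) = flat (pCons 0 P)"
      by (rule ext) (simp add: flat_def field_simps)
    then show ?thesis
      using flat_tendsto_0[of "pCons 0 P"] by (simp add: has_field_derivative_iff 3 flat_def)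
  qed
qed

lemma Cn_flat: "Cn n (flat P)"
proof (induction n arbitrary: P)
  case 0
  have "\<forall>x. isCont (flat P) x" using flat_has_real_derivative DERIV_isCont by blast
  then show ?case by (simp add: continuous_on_eq_continuous_at)
next
  case (Suc n)
  show ?case
  proof (rule Cn_SucI)
    show "(flat P has_derivative (\<lambda>h. flat (flat_deriv_poly P) x * h)) (at x)" for x
      using flat_has_real_derivative[of P x] by (simp add: has_field_derivative_def)
    show "Cn n (\<lambda>x. flat (flat_deriv_poly P) x * i)" if "i \<in> Basis" for i
      using that Suc.IH[of "flat_deriv_poly P"] by (simp add: Basis_real_def)
  qed
qed

definition bump :: "real \<Rightarrow> real" where
  "bump t = flat 1 (1 - t * t)"

definition bump_at :: "real \<Rightarrow> real \<Rightarrow> real" where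
  "bump_at z t = bump (t - z)"

definition odd_bump_at :: "real \<Rightarrow> real \<Rightarrow> real" where
  "odd_bump_at z t = (t - z) * bump (t - z)"

lemma Cn_bump: "Cn n bump"
  unfolding bump_def by (rule Cn_compose[OF Cn_flat Cn_diff[OF Cn_const Cn_mult[OF Cn_id Cn_id]]])

lemma Cn_bump_at: "Cn n (bump_at z)"
  unfolding bump_at_def by (rule Cn_compose[OF Cn_bump Cn_diff[OF Cn_id Cn_const]])

lemma Cn_odd_bump_at: "Cn n (odd_bump_at z)"
  unfolding odd_bump_at_def
  by (rule Cn_mult[OF Cn_diff[OF Cn_id Cn_const] Cn_compose[OF Cn_bump Cn_diff[OF Cn_id Cn_const]]])

lemma bump_0: "bump 0 = exp (-1)"
  by (simp add: bump_def flat_def)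

lemma bump_eq_0: "1 < \<bar>t\<bar> \<Longrightarrow> bump t = 0"
  by (simp add: bump_def flat_def abs_square_less_1 flip: power2_eq_square)

lemma bump_at_eq_0: "1 < \<bar>t - z\<bar> \<Longrightarrow> bump_at z t = 0"
  by (simp add: bump_at_def bump_eq_0)

lemma odd_bump_at_eq_0: "1 < \<bar>t - z\<bar> \<Longrightarrow> odd_bump_at z t = 0"
  by (simp add: odd_bump_at_def bump_eq_0)

lemma real_deriv_eq_0_outside:
  assumes "\<And>n. Cn n g" "\<And>t. 1 < \<bar>t - z\<bar> \<Longrightarrow> g t = 0" "1 < \<bar>t - z\<bar>"
  shows "real_deriv g t = 0"
proof -
  have "open {t. 1 < \<bar>t - z\<bar>}"
    by (rule open_Collect_less) (auto intro!: continuous_intros)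
  then have "(g has_real_derivative 0) (at t)"
    by (rule has_field_derivative_transform_within_open[OF DERIV_const]) (use assms(2,3) in auto)
  then show ?thesis
    using has_real_derivative_real_deriv[OF assms(1)] DERIV_unique by blast
qed

lemma real_deriv_bump_at_center: "real_deriv (bump_at z) z = 0"
proof -
  have "((\<lambda>t. flat 1 (1 - (t - z) * (t - z))) has_real_derivative
      flat (flat_deriv_poly 1) (1 - (z - z) * (z - z)) * (0 - ((1 - 0) * (z - z) + (z - z) * (1 - 0)))) (at z)"
    by (rule DERIV_chain2[OF flat_has_real_derivative]) (auto intro!: derivative_eq_intros)
  moreover have "bump_at z = (\<lambda>t. flat 1 (1 - (t - z) * (t - z)))"
    by (simp add: fun_eq_iff bump_at_def bump_def)
  ultimately have "(bump_at z has_real_derivative 0) (at z)"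
    by simp
  then show ?thesis
    using has_real_derivative_real_deriv[OF Cn_bump_at] DERIV_unique by blast
qed

lemma real_deriv_odd_bump_at_center: "real_deriv (odd_bump_at z) z = bump 0"
proof -
  have "((\<lambda>t. (t - z) * bump_at z t) has_real_derivative (z - z) * real_deriv (bump_at z) z + (1 - 0) * bump_at z z) (at z)"
    by (rule DERIV_mult'[OF _ has_real_derivative_real_deriv[OF Cn_bump_at]]) (auto intro!: derivative_eq_intros)
  moreover have "odd_bump_at z = (\<lambda>t. (t - z) * bump_at z t)"
    by (simp add: fun_eq_iff bump_at_def odd_bump_at_def)
  ultimately have "(odd_bump_at z has_real_derivative bump 0) (at z)"
    by (simp add: bump_at_def)
  then show ?thesis
    using has_real_derivative_real_deriv[OF Cn_odd_bump_at] DERIV_unique by blast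
qed

section \<open>Derivatives and coordinates in Euclidean space\<close>

lemma has_derivative_eq_0_if_translation_invariant:
  assumes "(f has_derivative f') (at p)" "\<And>t::real. f (p + t *\<^sub>R v) = f p"
  shows "f' v = 0"
proof -
  have "((\<lambda>t::real. p + t *\<^sub>R v) has_derivative (\<lambda>s. s *\<^sub>R v)) (at 0)"
    by (auto intro!: derivative_eq_intros)
  from has_derivative_compose[OF this, of f f'] assms(1)
  have "((\<lambda>t. f (p + t *\<^sub>R v)) has_derivative (\<lambda>s. f' (s *\<^sub>R v))) (at 0)"
    by simp
  then have "((\<lambda>t. f p) has_derivative (\<lambda>s. f' (s *\<^sub>R v))) (at (0::real))"
    using assms(2) by simp
  then have "(\<lambda>s. f' (s *\<^sub>R v)) = (\<lambda>s. 0)"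
    using has_derivative_unique has_derivative_const by blast
  then show ?thesis by (metis scaleR_one)
qed

lemma linear_sum_Basis_inner:
  fixes L :: "'a::euclidean_space \<Rightarrow> real"
  assumes "linear L"
  shows "(\<Sum>b\<in>Basis. L b * (v \<bullet> b)) = L v"
proof -
  have "L v = L (\<Sum>b\<in>Basis. (v \<bullet> b) *\<^sub>R b)" by (simp add: euclidean_representation)
  also have "\<dots> = (\<Sum>b\<in>Basis. (v \<bullet> b) * L b)"
    using assms by (simp add: linear_sum linear_scale)
  finally show ?thesis by (simp add: mult.commute)
qed

lemma exists_Basis_neq:
  assumes "2 \<le> DIM('a::euclidean_space)"
  shows "\<exists>w\<in>Basis. w \<noteq> (u::'a)"
proof (rule ccontr)
  assume "\<not> ?thesis"
  then have "card (Basis::'a set) \<le> card {u}" by (intro card_mono) auto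
  with assms show False by simp
qed

lemma exists_Basis_coordinate_far:
  fixes x y :: "'a::euclidean_space"
  assumes "real DIM('a) < dist y x"
  shows "\<exists>c\<in>Basis. 1 < \<bar>x \<bullet> c - y \<bullet> c\<bar>"
proof (rule ccontr)
  assume "\<not> ?thesis"
  then have "(\<Sum>b\<in>Basis. \<bar>(x - y) \<bullet> b\<bar>) \<le> (\<Sum>b\<in>(Basis::'a set). 1)"
    by (intro sum_mono) (auto simp: inner_diff_left not_less)
  then have "norm (x - y) \<le> real DIM('a)"
    using norm_le_l1[of "x - y"] by simp
  with assms show False by (simp add: dist_norm norm_minus_commute)
qed

lemma nonconstant_imp_partial_neq_0:
  fixes h :: "'a::euclidean_space \<Rightarrow> real"
  assumes "smooth_fun h" "\<exists>p q. h p \<noteq> h q"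
  shows "\<exists>p b. b \<in> Basis \<and> frechet_derivative h (at p) b \<noteq> 0"
proof (rule ccontr)
  assume "\<not> ?thesis"
  moreover have hd: "(h has_derivative frechet_derivative h (at p)) (at p)" for p
    using assms(1) Cn_Suc_has_derivative unfolding smooth_fun_def by blast
  ultimately have "frechet_derivative h (at p) = (\<lambda>v. 0)" for p
    by (intro ext)
      (metis (no_types, lifting) linear_sum_Basis_inner[OF has_derivative_linear[OF hd]] mult_eq_0_iff sum.neutral)
  with hd have "\<exists>c. \<forall>x\<in>UNIV. h x = c"
    by (metis convex_UNIV has_derivative_zero_constant)
  with assms(2) show False by auto
qed

lemma theta_invariant_nonconstant_imp_partial_neq_0:
  fixes h :: "real \<times> (real^'k) \<Rightarrow> real"
  assumes "smooth_fun h" "\<exists>p q. h p \<noteq> h q" "\<And>p. vf_apply gen_X h p = 0"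
  shows "\<exists>\<theta> x u. u \<in> Basis \<and> frechet_derivative h (at (\<theta>, x)) (0, u) \<noteq> 0"
proof -
  obtain p b where b: "b \<in> Basis" "frechet_derivative h (at p) b \<noteq> 0"
    using nonconstant_imp_partial_neq_0[OF assms(1,2)] by blast
  have "frechet_derivative h (at p) (1, 0) = 0"
    using assms(3)[of p] by (simp add: vf_apply_def gen_X_def)
  with b have "\<exists>u\<in>Basis. b = (0, u)"
    by (auto simp: Basis_prod_def Basis_real_def)
  with b show ?thesis by (cases p) blast
qed

section \<open>Vector fields on N \<times> R^k\<close>

lemma lie_bracket_gen_X_eq_0:
  fixes Y :: "real \<times> (real^'k) \<Rightarrow> real \<times> (real^'k)"
  assumes "Y differentiable (at p)" "\<And>\<theta> t x. Y (\<theta> + t, x) = Y (\<theta>, x)"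
  shows "lie_bracket gen_X Y p = 0"
proof -
  have "frechet_derivative Y (at p) (1, 0) = 0"
  proof (rule has_derivative_eq_0_if_translation_invariant[where f'="frechet_derivative Y (at p)"])
    show "(Y has_derivative frechet_derivative Y (at p)) (at p)"
      using assms(1) frechet_derivative_works by blast
    show "Y (p + t *\<^sub>R (1, 0)) = Y p" for t
      using assms(2)[of "fst p" t "snd p"] by (cases p) simp
  qed
  then show ?thesis by (simp add: lie_bracket_def gen_X_def[abs_def])
qed

lemma div_vol_eq_0:
  fixes P Q :: "'a::euclidean_space \<Rightarrow> real"
  assumes "\<And>q. \<rho> q \<noteq> 0"
    and P: "(P has_derivative DP) (at p)" and Q: "(Q has_derivative DQ) (at p)" and "DP u = DQ v"
  shows "div_vol \<rho> (\<lambda>q. inverse (\<rho> q) *\<^sub>R (P q *\<^sub>R u - Q q *\<^sub>R v)) p = 0"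
proof -
  let ?Y = "\<lambda>q. inverse (\<rho> q) *\<^sub>R (P q *\<^sub>R u - Q q *\<^sub>R v)"
  have "(\<lambda>q. \<rho> q * (?Y q \<bullet> b)) = (\<lambda>q. P q * (u \<bullet> b) - Q q * (v \<bullet> b))" for b
    using assms(1) by (simp add: fun_eq_iff inner_diff_left)
  then have "frechet_derivative (\<lambda>q. \<rho> q * (?Y q \<bullet> b)) (at p) = (\<lambda>h. DP h * (u \<bullet> b) - DQ h * (v \<bullet> b))" for b
    by (simp only:) (intro frechet_derivative_at[symmetric] has_derivative_diff has_derivative_mult_left P Q)
  then have "div_vol \<rho> ?Y p = ((\<Sum>b\<in>Basis. DP b * (u \<bullet> b)) - (\<Sum>b\<in>Basis. DQ b * (v \<bullet> b))) / \<rho> p"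
    by (simp only: div_vol_def sum_subtractf)
  also have "\<dots> = (DP u - DQ v) / \<rho> p"
    by (simp only: linear_sum_Basis_inner has_derivative_linear[OF P] has_derivative_linear[OF Q])
  finally show ?thesis using assms(4) by simp
qed

locale bump_coordinates =
  fixes x0 u w :: "real^'k"
  assumes u_Basis: "u \<in> Basis" and w_Basis: "w \<in> Basis" and u_neq_w: "u \<noteq> w"
begin

definition others :: "real \<times> (real^'k) \<Rightarrow> real" where
  "others p = (\<Prod>c\<in>Basis - {u, w}. bump_at (x0 \<bullet> c) (p \<bullet> (0, c)))"

text \<open>With F (\<theta>, x) = others (\<theta>, x) * bump_at (x0 \<bullet> u) (x \<bullet> u) * odd_bump_at (x0 \<bullet> w) (x \<bullet> w),
  the coefficients below are u_coeff = \<partial>F/\<partial>x_w and w_coeff = \<partial>F/\<partial>x_u.\<close>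

definition u_coeff :: "real \<times> (real^'k) \<Rightarrow> real" where
  "u_coeff p = others p * bump_at (x0 \<bullet> u) (p \<bullet> (0, u)) * real_deriv (odd_bump_at (x0 \<bullet> w)) (p \<bullet> (0, w))"

definition w_coeff :: "real \<times> (real^'k) \<Rightarrow> real" where
  "w_coeff p = others p * real_deriv (bump_at (x0 \<bullet> u)) (p \<bullet> (0, u)) * odd_bump_at (x0 \<bullet> w) (p \<bullet> (0, w))"

definition bump_field :: "(real \<times> (real^'k) \<Rightarrow> real) \<Rightarrow> real \<times> (real^'k) \<Rightarrow> real \<times> (real^'k)" where
  "bump_field \<rho> p = inverse (\<rho> p) *\<^sub>R (u_coeff p *\<^sub>R (0, u) - w_coeff p *\<^sub>R (0, w))"

lemma Cn_others: "Cn n others"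
  unfolding others_def[abs_def] by (rule Cn_prod) (auto intro: Cn_compose[OF Cn_bump_at Cn_inner])

lemma Cn_u_coeff: "Cn n u_coeff"
  unfolding u_coeff_def[abs_def]
  by (intro Cn_mult Cn_others Cn_compose[OF Cn_bump_at Cn_inner]
      Cn_compose[OF Cn_real_deriv[OF Cn_odd_bump_at] Cn_inner])

lemma Cn_w_coeff: "Cn n w_coeff"
  unfolding w_coeff_def[abs_def]
  by (intro Cn_mult Cn_others Cn_compose[OF Cn_odd_bump_at Cn_inner]
      Cn_compose[OF Cn_real_deriv[OF Cn_bump_at] Cn_inner])

lemma inner_bump_field:
  "bump_field \<rho> p \<bullet> b = inverse (\<rho> p) * (u_coeff p * ((0, u) \<bullet> b) - w_coeff p * ((0, w) \<bullet> b))"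
  by (simp only: bump_field_def inner_scaleR_left inner_diff_left)

lemma smooth_vf_bump_field:
  assumes "smooth_fun \<rho>" "\<And>p. \<rho> p \<noteq> 0"
  shows "smooth_vf (bump_field \<rho>)"
  using assms unfolding smooth_vf_def smooth_fun_def inner_bump_field
  by (auto intro!: Cn_mult Cn_inverse Cn_diff Cn_u_coeff Cn_w_coeff Cn_const)

lemma bump_field_theta_invariant:
  assumes "\<And>t \<theta> x. \<rho> (\<theta> + t, x) = \<rho> (\<theta>, x)"
  shows "bump_field \<rho> (\<theta> + t, x) = bump_field \<rho> (\<theta>, x)"
  by (simp add: bump_field_def u_coeff_def w_coeff_def others_def inner_Pair_0 assms)

lemma bump_field_differentiable:
  assumes "smooth_fun \<rho>" "\<And>p. \<rho> p \<noteq> 0"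
  shows "bump_field \<rho> differentiable (at p)"
proof -
  have "f differentiable (at p)" if "\<And>n. Cn n f" for f :: "real \<times> (real^'k) \<Rightarrow> real"
    using Cn_Suc_has_derivative[OF that] unfolding differentiable_def by blast
  then have "\<rho> differentiable (at p)" "u_coeff differentiable (at p)" "w_coeff differentiable (at p)"
    using assms(1) Cn_u_coeff Cn_w_coeff unfolding smooth_fun_def by blast+
  then show ?thesis
    unfolding bump_field_def[abs_def] using assms(2)
    by (intro differentiable_scaleR differentiable_inverse differentiable_diff differentiable_const)
qed

lemma others_partial_eq_0:
  assumes "c \<in> {u, w}"
  shows "frechet_derivative others (at p) (0, c) = 0"
proof (rule has_derivative_eq_0_if_translation_invariant[OF Cn_Suc_has_derivative[OF Cn_others]])
  show "others (p + t *\<^sub>R (0, c)) = others p" for t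
    unfolding others_def using assms u_Basis w_Basis
    by (intro prod.cong) (auto simp: inner_add_left inner_Basis)
qed

lemma u_coeff_partial_u:
  "frechet_derivative u_coeff (at p) (0, u) = others p * real_deriv (bump_at (x0 \<bullet> u)) (p \<bullet> (0, u))
     * real_deriv (odd_bump_at (x0 \<bullet> w)) (p \<bullet> (0, w))"
proof -
  have "(u_coeff has_derivative (\<lambda>h.
      others p * bump_at (x0 \<bullet> u) (p \<bullet> (0, u))
        * (h \<bullet> (0, w) * real_deriv (real_deriv (odd_bump_at (x0 \<bullet> w))) (p \<bullet> (0, w)))
      + (others p * (h \<bullet> (0, u) * real_deriv (bump_at (x0 \<bullet> u)) (p \<bullet> (0, u)))
         + frechet_derivative others (at p) h * bump_at (x0 \<bullet> u) (p \<bullet> (0, u)))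
        * real_deriv (odd_bump_at (x0 \<bullet> w)) (p \<bullet> (0, w)))) (at p)"
    unfolding u_coeff_def[abs_def]
    by (intro has_derivative_mult Cn_Suc_has_derivative[OF Cn_others] has_derivative_comp_inner
        Cn_bump_at Cn_real_deriv Cn_odd_bump_at)
  then show ?thesis
    using others_partial_eq_0[of u p] u_Basis w_Basis u_neq_w
    by (simp add: frechet_derivative_at[symmetric] inner_Basis)
qed

lemma w_coeff_partial_w:
  "frechet_derivative w_coeff (at p) (0, w) = others p * real_deriv (bump_at (x0 \<bullet> u)) (p \<bullet> (0, u))
     * real_deriv (odd_bump_at (x0 \<bullet> w)) (p \<bullet> (0, w))"
proof -
  have "(w_coeff has_derivative (\<lambda>h.
      others p * real_deriv (bump_at (x0 \<bullet> u)) (p \<bullet> (0, u))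
        * (h \<bullet> (0, w) * real_deriv (odd_bump_at (x0 \<bullet> w)) (p \<bullet> (0, w)))
      + (others p * (h \<bullet> (0, u) * real_deriv (real_deriv (bump_at (x0 \<bullet> u))) (p \<bullet> (0, u)))
         + frechet_derivative others (at p) h * real_deriv (bump_at (x0 \<bullet> u)) (p \<bullet> (0, u)))
        * odd_bump_at (x0 \<bullet> w) (p \<bullet> (0, w)))) (at p)"
    unfolding w_coeff_def[abs_def]
    by (intro has_derivative_mult Cn_Suc_has_derivative[OF Cn_others] has_derivative_comp_inner
        Cn_bump_at Cn_real_deriv Cn_odd_bump_at)
  then show ?thesis
    using others_partial_eq_0[of w p] u_Basis w_Basis u_neq_w
    by (simp add: frechet_derivative_at[symmetric] inner_Basis)
qed

lemma div_vol_bump_field: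
  assumes "\<And>p. \<rho> p \<noteq> 0"
  shows "div_vol \<rho> (bump_field \<rho>) p = 0"
  unfolding bump_field_def[abs_def]
  by (rule div_vol_eq_0[OF assms Cn_Suc_has_derivative[OF Cn_u_coeff] Cn_Suc_has_derivative[OF Cn_w_coeff]])
    (simp only: u_coeff_partial_u w_coeff_partial_w)

lemma compact_supp_N_bump_field: "compact_supp_N (bump_field \<rho>)"
  unfolding compact_supp_N_def
proof (intro exI[of _ "cball x0 (real DIM(real^'k))"] conjI allI impI bounded_cball)
  fix \<theta> x
  assume "x \<notin> cball x0 (real DIM(real^'k))"
  then obtain c where c: "c \<in> Basis" "1 < \<bar>x \<bullet> c - x0 \<bullet> c\<bar>"
    using exists_Basis_coordinate_far[of x0 x] by (auto simp: not_le)
  have "u_coeff (\<theta>, x) = 0 \<and> w_coeff (\<theta>, x) = 0"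
  proof -
    consider "c = u" | "c = w" | "c \<in> Basis - {u, w}" using c(1) by blast
    then show ?thesis
    proof cases
      case 1
      with c show ?thesis
        by (simp add: u_coeff_def w_coeff_def inner_Pair_0 bump_at_eq_0
            real_deriv_eq_0_outside[OF Cn_bump_at bump_at_eq_0])
    next
      case 2
      with c show ?thesis
        by (simp add: u_coeff_def w_coeff_def inner_Pair_0 odd_bump_at_eq_0
            real_deriv_eq_0_outside[OF Cn_odd_bump_at odd_bump_at_eq_0])
    next
      case 3
      with c have "others (\<theta>, x) = 0"
        unfolding others_def by (intro prod_zero) (auto simp: inner_Pair_0 intro!: bexI[of _ c] bump_at_eq_0)
      then show ?thesis by (simp add: u_coeff_def w_coeff_def)
    qed
  qed
  then show "bump_field \<rho> (\<theta>, x) = 0" by (simp add: bump_field_def)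
qed

lemma u_coeff_center_neq_0: "u_coeff (\<theta>, x0) \<noteq> 0"
  by (simp add: u_coeff_def others_def inner_Pair_0 bump_at_def real_deriv_odd_bump_at_center bump_0)

lemma bump_field_center: "bump_field \<rho> (\<theta>, x0) = (u_coeff (\<theta>, x0) / \<rho> (\<theta>, x0)) *\<^sub>R (0, u)"
  by (simp add: bump_field_def w_coeff_def inner_Pair_0 real_deriv_bump_at_center divide_inverse)

lemma vf_apply_bump_field_center_neq_0:
  assumes "smooth_fun h" "\<rho> (\<theta>, x0) \<noteq> 0" "frechet_derivative h (at (\<theta>, x0)) (0, u) \<noteq> 0"
  shows "vf_apply (bump_field \<rho>) h (\<theta>, x0) \<noteq> 0"
proof -
  have "linear (frechet_derivative h (at (\<theta>, x0)))"
    using assms(1) Cn_Suc_has_derivative has_derivative_linear unfolding smooth_fun_def by blast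
  then have "vf_apply (bump_field \<rho>) h (\<theta>, x0)
      = u_coeff (\<theta>, x0) / \<rho> (\<theta>, x0) * frechet_derivative h (at (\<theta>, x0)) (0, u)"
    by (simp only: vf_apply_def bump_field_center linear_scale real_scaleR_def)
  with assms(2,3) u_coeff_center_neq_0 show ?thesis by simp
qed

end

theorem lemma3p4:
  fixes m :: nat
    and \<rho> :: "real \<times> (real^'k) \<Rightarrow> real"
    and h :: "real \<times> (real^'k) \<Rightarrow> real"
  assumes "m \<ge> 1"
    and "CARD('k) \<ge> 2"
    and "smooth_fun \<rho>" and "\<forall>p. \<rho> p \<noteq> 0"
    and "\<forall>t \<theta> x. \<rho> (\<theta> + t, x) = \<rho> (\<theta>, x)"
    and "smooth_fun h" and "theta_periodic (2 * pi / real m) h"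
    and "\<forall>p. vf_apply gen_X h p = 0"
    and "\<exists>p q. h p \<noteq> h q"
  shows "\<exists>Y. smooth_vf Y \<and> theta_periodic (2 * pi / real m) Y \<and> compact_supp_N Y
           \<and> (\<forall>p. div_vol \<rho> Y p = 0)
           \<and> (\<forall>p. lie_bracket gen_X Y p = 0)
           \<and> (\<exists>p. vf_apply Y h p \<noteq> 0)"
proof -
  obtain \<theta>0 x0 u where u: "u \<in> Basis" and hu: "frechet_derivative h (at (\<theta>0, x0)) (0, u) \<noteq> 0"
    using theta_invariant_nonconstant_imp_partial_neq_0[OF assms(6,9)] assms(8) by blast
  obtain w :: "real^'k" where w: "w \<in> Basis" "u \<noteq> w"
    using exists_Basis_neq[of u] assms(2) by auto
  interpret bump_coordinates x0 u w
    using u w by unfold_locales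
  \<comment> \<open>The field does not depend on \<theta> at all.\<close>
  have invariant: "bump_field \<rho> (\<theta> + t, x) = bump_field \<rho> (\<theta>, x)" for \<theta> t x
    using bump_field_theta_invariant assms(5) by blast
  show ?thesis
  proof (intro exI[of _ "bump_field \<rho>"] conjI allI exI)
    show "smooth_vf (bump_field \<rho>)" using smooth_vf_bump_field assms(3,4) by blast
    show "theta_periodic (2 * pi / real m) (bump_field \<rho>)"
      unfolding theta_periodic_def using invariant by blast
    show "compact_supp_N (bump_field \<rho>)" by (rule compact_supp_N_bump_field)
    show "div_vol \<rho> (bump_field \<rho>) p = 0" for p using div_vol_bump_field assms(4) by blast
    show "lie_bracket gen_X (bump_field \<rho>) p = 0" for p
      using lie_bracket_gen_X_eq_0 bump_field_differentiable assms(3,4) invariant by blast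
    show "vf_apply (bump_field \<rho>) h (\<theta>0, x0) \<noteq> 0"
      using vf_apply_bump_field_center_neq_0 assms(4,6) hu by blast
  qed
qed

end
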